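(* Let $d\ge 4$ be an integer such that there exists a Hadamard matrix of order $d$ (a $d\times d$ matrix $H_d$ with entries $\pm1$ satisfying $H_d^TH_d=d\,I_d$). Then there is an explicit construction of a $\big\lfloor\frac12\sqrt{d}\big\rfloor$-neighborly centrally symmetric $d$-dimensional polytope with $4d$ vertices.
   Context: A polytope $P\subset\mathbb{R}^d$ is centrally symmetric (cs) if $P=-P$. A cs polytope $P$ is $k$-neighborly if every set of $k$ of its vertices, no two of which are antipodes (i.e. no two of the form $v,-v$), is the vertex set of a face of $P$. *)

theory Defs
  imports "HOL-Analysis.Analysis"
begin

definition hadamard_matrix :: "real^'n^'n \<Rightarrow> bool" where
  "hadamard_matrix H \<longleftrightarrow>
     (\<forall>i j. H $ i $ j = 1 \<or> H $ i $ j = -1) \<and>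
     transpose H ** H = (of_nat CARD('n) :: real) *\<^sub>R mat 1"

definition vertices :: "'a::real_vector set \<Rightarrow> 'a set" where
  "vertices P = {v. v extreme_point_of P}"

definition centrally_symmetric :: "'a::real_vector set \<Rightarrow> bool" where
  "centrally_symmetric P \<longleftrightarrow> P = uminus ` P"

definition cs_neighborly :: "nat \<Rightarrow> 'a::real_vector set \<Rightarrow> bool" where
  "cs_neighborly k P \<longleftrightarrow>
     (\<forall>S. S \<subseteq> vertices P \<and> card S = k \<and> (\<forall>x\<in>S. -x \<notin> S) \<longrightarrow>
          (\<exists>F. F face_of P \<and> vertices F = S))"

end

theory Submission
  imports Defs
begin

(* The polytope is the convex hull of the points +-e_i and +-q_j, where the q_j are the
   columns of the orthogonal matrix Q = H / sqrt d. These 4d points are unit vectors whose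
   mutual inner products (0, +-1/sqrt d) lie strictly between -1 and 1, so they are exactly
   the vertices. Given k <= sqrt d / 2 vertices without an antipodal pair, one looks for a
   vector a that has inner product 1 with each of them and inner product of absolute value
   < 1 with every other +-e_i, +-q_j; then the hyperplane a . x = 1 cuts out the required face.
   Writing a = x + Q y with x supported on the chosen indices i and y on the chosen indices j
   turns the prescribed values into a linear fixpoint system whose coupling has l1-norm at
   most k / sqrt d <= 1/2. This makes the system solvable and keeps all the unprescribed
   inner products below 1/2. *)

lemma inner_lt_one_if_unit_neq:
  fixes u w :: "'a::real_inner"
  assumes "norm u = 1" "norm w = 1" "u \<noteq> w"
  shows "w \<bullet> u < 1"
proof -
  have "0 < norm (u - w) ^ 2" using assms by simp
  also have "norm (u - w) ^ 2 = u \<bullet> u - 2 * (w \<bullet> u) + w \<bullet> w"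
    by (simp add: power2_norm_eq_inner inner_diff inner_commute algebra_simps)
  also have "u \<bullet> u = 1" using assms by (metis power2_norm_eq_inner one_power2)
  also have "w \<bullet> w = 1" using assms by (metis power2_norm_eq_inner one_power2)
  finally show ?thesis by simp
qed

lemma vertices_convex_hull_unit_vectors:
  fixes V :: "'a::euclidean_space set"
  assumes "finite V" and unit: "\<And>u. u \<in> V \<Longrightarrow> norm u = 1"
  shows "vertices (convex hull V) = V"
proof
  show "vertices (convex hull V) \<subseteq> V"
    by (auto simp: vertices_def extreme_point_of_convex_hull)
  show "V \<subseteq> vertices (convex hull V)"
  proof
    fix w assume w: "w \<in> V"
    have "convex hull (V - {w}) \<subseteq> {x. w \<bullet> x < 1}"
      by (rule hull_minimal)
        (use w unit inner_lt_one_if_unit_neq in \<open>auto simp: convex_halfspace_lt\<close>)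
    moreover have "w \<bullet> w = 1"
      using unit[OF w] by (metis power2_norm_eq_inner one_power2)
    ultimately have "w \<notin> convex hull (V - {w})" by auto
    then have "w extreme_point_of convex hull (insert w (V - {w}))"
      using \<open>finite V\<close> by (intro extreme_point_of_convex_hull_insert) auto
    then show "w \<in> vertices (convex hull V)"
      using w by (simp add: vertices_def insert_absorb)
  qed
qed

lemma exposed_face_of_convex_hull:
  fixes V :: "'a::euclidean_space set"
  assumes "vertices (convex hull V) = V" and "S \<subseteq> V"
    and "\<And>u. u \<in> S \<Longrightarrow> a \<bullet> u = c" and "\<And>u. u \<in> V \<Longrightarrow> u \<notin> S \<Longrightarrow> a \<bullet> u < c"
  shows "\<exists>F. F face_of convex hull V \<and> vertices F = S"
proof -
  have "convex hull V \<subseteq> {x. a \<bullet> x \<le> c}"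
    by (rule hull_minimal) (use assms(3,4) in \<open>force simp: convex_halfspace_le\<close>)+
  then have F: "convex hull V \<inter> {x. a \<bullet> x = c} face_of convex hull V"
    by (intro face_of_Int_supporting_hyperplane_le) auto
  have "vertices (convex hull V \<inter> {x. a \<bullet> x = c}) = V \<inter> {x. a \<bullet> x = c}"
    using assms(1) extreme_point_of_def by (auto simp: vertices_def extreme_point_of_face[OF F])
  also have "\<dots> = S"
    using assms(2-4) by force
  finally show ?thesis
    using F by blast
qed

definition signed_points :: "('p \<Rightarrow> 'a::real_vector) \<Rightarrow> 'a set" where
  "signed_points w = range w \<union> range (\<lambda>p. - w p)"

lemma vertices_convex_hull_signed_points:
  fixes w :: "'p::finite \<Rightarrow> 'a::euclidean_space"
  assumes "\<And>p. norm (w p) = 1"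
  shows "vertices (convex hull signed_points w) = signed_points w"
  using assms by (intro vertices_convex_hull_unit_vectors) (auto simp: signed_points_def)

lemma polytope_convex_hull_signed_points:
  "polytope (convex hull signed_points (w :: 'p::finite \<Rightarrow> 'a::real_vector))"
proof -
  have "finite (signed_points w)"
    by (simp add: signed_points_def)
  then show ?thesis
    by (auto simp: polytope_def)
qed

lemma centrally_symmetric_convex_hull_signed_points:
  "centrally_symmetric (convex hull signed_points w)"
proof -
  have "uminus ` signed_points w = signed_points w"
    by (auto simp: signed_points_def image_Un image_image)
  then show ?thesis
    using convex_hull_linear_image[OF linear_uminus, of "signed_points w"]
    by (simp add: centrally_symmetric_def)
qed

lemma aff_dim_convex_hull_signed_points:
  fixes w :: "'p \<Rightarrow> 'a::euclidean_space"
  assumes "span (range w) = UNIV"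
  shows "aff_dim (convex hull signed_points w) = DIM('a)"
proof -
  obtain p :: 'p where True by simp
  have "(1/2) *\<^sub>R w p + (1/2) *\<^sub>R (- w p) \<in> affine hull signed_points w"
    by (intro mem_affine) (auto simp: signed_points_def hull_inc)
  then have "affine hull signed_points w = span (signed_points w)"
    by (intro affine_hull_span_0) simp
  also have "\<dots> = UNIV"
    using span_mono[of "range w" "signed_points w"] assms
    by (auto simp: signed_points_def)
  finally show ?thesis
    by (simp add: aff_dim_convex_hull aff_dim_eq_full)
qed

lemma unit_vectors_inj_no_antipodes:
  fixes w :: "'p \<Rightarrow> 'a::real_inner"
  assumes unit: "\<And>p. norm (w p) = 1" and coherent: "\<And>p q. p \<noteq> q \<Longrightarrow> \<bar>w p \<bullet> w q\<bar> < 1"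
  shows "inj w" and "w p \<noteq> - w q"
proof -
  have self: "w p \<bullet> w p = 1" for p
    using unit[of p] by (metis power2_norm_eq_inner one_power2)
  show "inj w"
  proof (rule injI)
    fix p q assume "w p = w q"
    then show "p = q"
      using coherent[of p q] self[of q] by force
  qed
  show "w p \<noteq> - w q"
  proof
    assume "w p = - w q"
    then have "w p \<bullet> w q = -1"
      using self[of q] by simp
    then show False
      using coherent[of p q] self[of q] by (cases "p = q") auto
  qed
qed

lemma card_signed_points:
  fixes w :: "'p::finite \<Rightarrow> 'a::real_inner"
  assumes "\<And>p. norm (w p) = 1" and "\<And>p q. p \<noteq> q \<Longrightarrow> \<bar>w p \<bullet> w q\<bar> < 1"
  shows "card (signed_points w) = 2 * CARD('p)"
proof -
  note distinct = unit_vectors_inj_no_antipodes[of w, OF assms]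
  have "inj (\<lambda>p. - w p)"
    using distinct(1) by (auto simp: inj_def)
  moreover have "range w \<inter> range (\<lambda>p. - w p) = {}"
    using distinct(2) by auto
  ultimately show ?thesis
    using distinct(1) by (simp add: signed_points_def card_Un_disjoint card_image)
qed

lemma card_signed_preimage_le:
  fixes w :: "'p \<Rightarrow> 'a::group_add"
  assumes "inj w" and "\<And>p q. w p \<noteq> - w q" and "finite S"
  shows "card {p. w p \<in> S \<or> - w p \<in> S} \<le> card S"
proof -
  have "inj_on (\<lambda>p. if w p \<in> S then w p else - w p) {p. w p \<in> S \<or> - w p \<in> S}"
  proof (rule inj_onI)
    fix p q assume "(if w p \<in> S then w p else - w p) = (if w q \<in> S then w q else - w q)"
    then have "w p = w q"
      using assms(2)[of p q] assms(2)[of q p] by (cases "w p \<in> S"; cases "w q \<in> S") auto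
    then show "p = q"
      using \<open>inj w\<close> by (simp add: inj_eq)
  qed
  then show ?thesis
    by (rule card_inj_on_le) (auto simp: \<open>finite S\<close>)
qed

lemma cs_neighborly_signed_points:
  fixes w :: "'p::finite \<Rightarrow> 'a::euclidean_space"
  assumes unit: "\<And>p. norm (w p) = 1" and coherent: "\<And>p q. p \<noteq> q \<Longrightarrow> \<bar>w p \<bullet> w q\<bar> < 1"
    and interpolate: "\<And>K s. card K \<le> k \<Longrightarrow> (\<And>p. s p = 1 \<or> s p = -1) \<Longrightarrow>
       \<exists>a. (\<forall>p\<in>K. a \<bullet> w p = s p) \<and> (\<forall>p. p \<notin> K \<longrightarrow> \<bar>a \<bullet> w p\<bar> < 1)"
  shows "cs_neighborly k (convex hull signed_points w)"
  unfolding cs_neighborly_def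
proof (intro allI impI, elim conjE)
  define V where "V = signed_points w"
  have vertices_V: "vertices (convex hull V) = V"
    using vertices_convex_hull_signed_points[of w, OF unit] by (simp add: V_def)
  fix S assume "S \<subseteq> vertices (convex hull signed_points w)" "card S = k"
    and S_antipodes: "\<forall>x\<in>S. - x \<notin> S"
  then have "S \<subseteq> V" using vertices_V by (simp add: V_def)
  then have "finite S"
    by (rule finite_subset) (simp add: V_def signed_points_def)
  define K where "K = {p. w p \<in> S \<or> - w p \<in> S}"
  define s where "s p = (if w p \<in> S then 1 else -1 :: real)" for p
  have "card K \<le> card S"
    using unit_vectors_inj_no_antipodes[of w, OF unit coherent] \<open>finite S\<close>
    unfolding K_def by (rule card_signed_preimage_le)
  moreover have "s p = 1 \<or> s p = -1" for p
    by (simp add: s_def)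
  ultimately obtain a where a_K: "\<forall>p\<in>K. a \<bullet> w p = s p"
    and a_not_K: "\<forall>p. p \<notin> K \<longrightarrow> \<bar>a \<bullet> w p\<bar> < 1"
    using interpolate \<open>card S = k\<close> by blast
  have a_on_V: "(u \<in> S \<longrightarrow> a \<bullet> u = 1) \<and> (u \<notin> S \<longrightarrow> a \<bullet> u < 1)" if "u \<in> V" for u
  proof -
    obtain p where "u = w p \<or> u = - w p"
      using \<open>u \<in> V\<close> by (auto simp: V_def signed_points_def)
    then show ?thesis
      using a_K a_not_K S_antipodes
      by (cases "p \<in> K") (auto simp: K_def s_def abs_less_iff)
  qed
  have "\<exists>F. F face_of convex hull V \<and> vertices F = S"
    using \<open>S \<subseteq> V\<close> a_on_V by (intro exposed_face_of_convex_hull[OF vertices_V \<open>S \<subseteq> V\<close>]) auto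
  then show "\<exists>F. F face_of convex hull signed_points w \<and> vertices F = S"
    by (simp add: V_def)
qed

definition vec_restrict :: "'n set \<Rightarrow> real^'n \<Rightarrow> real^'n" where
  "vec_restrict K z = (\<chi> i. if i \<in> K then z$i else 0)"

lemma vec_restrict_diff: "vec_restrict K (u - v) = vec_restrict K u - vec_restrict K v"
  by (simp add: vec_restrict_def vec_eq_iff)

lemma abs_matrix_vector_mult_le:
  fixes M :: "real^'n^'m"
  assumes "\<And>i j. \<bar>M$i$j\<bar> \<le> r"
  shows "\<bar>(M *v y)$i\<bar> \<le> r * (\<Sum>j\<in>UNIV. \<bar>y$j\<bar>)"
proof -
  have "\<bar>(M *v y)$i\<bar> = \<bar>\<Sum>j\<in>UNIV. M$i$j * y$j\<bar>"
    by (simp add: matrix_vector_mult_def)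
  also have "\<dots> \<le> (\<Sum>j\<in>UNIV. \<bar>M$i$j * y$j\<bar>)"
    by (rule sum_abs)
  also have "\<dots> \<le> (\<Sum>j\<in>UNIV. r * \<bar>y$j\<bar>)"
    by (rule sum_mono) (simp add: abs_mult assms mult_right_mono)
  finally show ?thesis
    by (simp add: sum_distrib_left)
qed

lemma sum_abs_vec_restrict_le:
  assumes "\<And>i. i \<in> K \<Longrightarrow> \<bar>z$i\<bar> \<le> c"
  shows "(\<Sum>i\<in>UNIV. \<bar>vec_restrict K z $ i\<bar>) \<le> real (card K) * c"
proof -
  have "(\<Sum>i\<in>UNIV. \<bar>vec_restrict K z $ i\<bar>) = (\<Sum>i\<in>K. \<bar>z $ i\<bar>)"
    by (simp add: vec_restrict_def sum.If_cases if_distrib[of abs])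
  also have "\<dots> \<le> (\<Sum>i\<in>K. c)"
    by (rule sum_mono) (simp add: assms)
  finally show ?thesis by simp
qed

lemma coupled_bounds_half:
  fixes \<alpha> \<beta> c u v :: real
  assumes "0 \<le> \<alpha>" "0 \<le> \<beta>" "\<alpha> + \<beta> \<le> 1/2" "0 \<le> c"
    and u: "u \<le> \<alpha> * (c + v)" and v: "v \<le> \<beta> * (c + u)"
  shows "2 * u \<le> c"
proof -
  have "u \<le> \<alpha> * c + \<alpha> * (\<beta> * (c + u))"
    using u mult_left_mono[OF v \<open>0 \<le> \<alpha>\<close>] by (simp add: distrib_left)
  then have "(1 - \<alpha> * \<beta>) * u \<le> \<alpha> * (1 + \<beta>) * c"
    by (simp add: algebra_simps)
  moreover have "2 * (\<alpha> * (1 + \<beta>)) \<le> 1 - \<alpha> * \<beta>"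
  proof -
    have "\<alpha> * \<beta> \<le> \<alpha> * (1/2 - \<alpha>)"
      using assms by (intro mult_left_mono) auto
    moreover have "0 \<le> (1/2 - \<alpha>) * (2 - 3 * \<alpha>)"
      using assms by (intro mult_nonneg_nonneg) auto
    ultimately show ?thesis
      by (simp add: algebra_simps)
  qed
  ultimately have "(1 - \<alpha> * \<beta>) * (2 * u) \<le> (1 - \<alpha> * \<beta>) * c"
    using mult_right_mono[OF _ \<open>0 \<le> c\<close>] by fastforce
  moreover have "\<alpha> * \<beta> < 1"
    using mult_mono[of \<alpha> "1/2" \<beta> "1/2"] assms by auto
  ultimately show ?thesis
    by simp
qed

lemma vec_restrict_fixpoint_bounds:
  fixes Q :: "real^'n^'m" and I :: "'m set" and J :: "'n set"
  assumes Q: "\<And>i j. \<bar>Q$i$j\<bar> \<le> r" and "0 \<le> r"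
    and card: "(real (card I) + real (card J)) * r \<le> 1/2"
    and "0 \<le> c" and s: "\<And>i. \<bar>s$i\<bar> \<le> c" and t: "\<And>j. \<bar>t$j\<bar> \<le> c"
    and x: "x = vec_restrict I (s - Q *v y)" and y: "y = vec_restrict J (t - transpose Q *v x)"
  shows "\<bar>(Q *v y)$i\<bar> \<le> c/2" and "\<bar>(transpose Q *v x)$j\<bar> \<le> c/2"
proof -
  define X where "X = (\<Sum>i\<in>UNIV. \<bar>x$i\<bar>)"
  define Y where "Y = (\<Sum>j\<in>UNIV. \<bar>y$j\<bar>)"
  have Qt: "\<bar>transpose Q$j$i\<bar> \<le> r" for i j
    using Q by (simp add: transpose_def)
  have Qy: "\<bar>(Q *v y)$i\<bar> \<le> r * Y" for i
    using abs_matrix_vector_mult_le[OF Q] by (simp add: Y_def)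
  have Qx: "\<bar>(transpose Q *v x)$j\<bar> \<le> r * X" for j
    using abs_matrix_vector_mult_le[OF Qt] by (simp add: X_def)
  have "X \<le> real (card I) * (c + r * Y)"
    unfolding X_def x
  proof (rule sum_abs_vec_restrict_le)
    show "\<bar>(s - Q *v y)$i\<bar> \<le> c + r * Y" for i
      using s[of i] Qy[of i] abs_triangle_ineq4[of "s$i" "(Q *v y)$i"] by simp
  qed
  then have rX: "r * X \<le> (real (card I) * r) * (c + r * Y)"
    using mult_left_mono[OF _ \<open>0 \<le> r\<close>] by (fastforce simp: algebra_simps)
  have "Y \<le> real (card J) * (c + r * X)"
    unfolding Y_def y
  proof (rule sum_abs_vec_restrict_le)
    show "\<bar>(t - transpose Q *v x)$j\<bar> \<le> c + r * X" for j
      using t[of j] Qx[of j] abs_triangle_ineq4[of "t$j" "(transpose Q *v x)$j"] by simp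
  qed
  then have rY: "r * Y \<le> (real (card J) * r) * (c + r * X)"
    using mult_left_mono[OF _ \<open>0 \<le> r\<close>] by (fastforce simp: algebra_simps)
  have "2 * (r * Y) \<le> c" and "2 * (r * X) \<le> c"
    using coupled_bounds_half[OF _ _ _ \<open>0 \<le> c\<close> rY rX] coupled_bounds_half[OF _ _ _ \<open>0 \<le> c\<close> rX rY]
      card \<open>0 \<le> r\<close> by (simp_all add: algebra_simps)
  then show "\<bar>(Q *v y)$i\<bar> \<le> c/2" and "\<bar>(transpose Q *v x)$j\<bar> \<le> c/2"
    using Qy[of i] Qx[of j] by simp_all
qed

lemma vec_restrict_fixpoint_exists:
  fixes Q :: "real^'n^'m" and I :: "'m set" and J :: "'n set"
  assumes Q: "\<And>i j. \<bar>Q$i$j\<bar> \<le> r" and "0 \<le> r"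
    and card: "(real (card I) + real (card J)) * r \<le> 1/2"
  shows "\<exists>x y. x = vec_restrict I (s - Q *v y) \<and> y = vec_restrict J (t - transpose Q *v x)"
proof -
  define L where "L p = (fst p + vec_restrict I (Q *v snd p), snd p + vec_restrict J (transpose Q *v fst p))"
    for p :: "(real^'m) \<times> (real^'n)"
  have "linear L"
    unfolding L_def linear_iff
    by (auto simp: vec_restrict_def vec_eq_iff matrix_vector_mult_def sum.distrib
        sum_distrib_left algebra_simps)
  moreover have "p = 0" if "L p = 0" for p
  proof -
    obtain x y where p: "p = (x, y)" by fastforce
    have x0: "x = - vec_restrict I (Q *v y)" and y0: "y = - vec_restrict J (transpose Q *v x)"
      using \<open>L p = 0\<close> by (simp_all add: L_def p eq_neg_iff_add_eq_0 zero_prod_def)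
    have x: "x = vec_restrict I (0 - Q *v y)"
      by (subst x0) (simp add: vec_restrict_def vec_eq_iff)
    have y: "y = vec_restrict J (0 - transpose Q *v x)"
      by (subst y0) (simp add: vec_restrict_def vec_eq_iff)
    have "(Q *v y)$i = 0" and "(transpose Q *v x)$j = 0" for i j
      using vec_restrict_fixpoint_bounds[where c = 0, OF Q \<open>0 \<le> r\<close> card _ _ _ x y] by auto
    then have "x = 0" and "y = 0"
      by (subst x0 y0, simp add: vec_restrict_def vec_eq_iff)+
    then show "p = 0"
      by (simp add: p zero_prod_def)
  qed
  ultimately have "surj L"
    by (intro linear_injective_imp_surjective) (simp_all add: linear_injective_0)
  then obtain x y where "L (x, y) = (vec_restrict I s, vec_restrict J t)"
    by (metis surjD surj_pair)
  then have "x = vec_restrict I s - vec_restrict I (Q *v y)"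
    and "y = vec_restrict J t - vec_restrict J (transpose Q *v x)"
    by (simp_all add: L_def eq_diff_eq)
  then show ?thesis
    by (auto simp: vec_restrict_diff)
qed

definition axes_and_columns :: "real^'n^'m \<Rightarrow> 'm + 'n \<Rightarrow> real^'m" where
  "axes_and_columns Q = case_sum (\<lambda>i. axis i 1) (\<lambda>j. column j Q)"

lemma inner_column: "a \<bullet> column j Q = (transpose Q *v a)$j"
  by (simp add: column_def inner_vec_def vector_matrix_mult_def mult.commute)

lemma inner_column_column:
  fixes Q :: "real^'n^'m"
  assumes "transpose Q ** Q = mat 1"
  shows "column j Q \<bullet> column j' Q = (if j = j' then 1 else 0)"
  using arg_cong[OF assms, of "\<lambda>A. A $ j $ j'"]
  by (simp add: matrix_mult_transpose_dot_column mat_def)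

lemma norm_axes_and_columns:
  assumes "transpose Q ** Q = mat 1"
  shows "norm (axes_and_columns Q p) = 1"
  using inner_column_column[OF assms]
  by (cases p) (simp_all add: axes_and_columns_def norm_eq_1)

lemma abs_inner_axes_and_columns_lt_1:
  assumes "transpose Q ** Q = mat 1" and "\<And>i j. \<bar>Q$i$j\<bar> < 1" and "p \<noteq> q"
  shows "\<bar>axes_and_columns Q p \<bullet> axes_and_columns Q q\<bar> < 1"
proof -
  have "axis i 1 \<bullet> column j Q = Q$i$j" "column j Q \<bullet> axis i 1 = Q$i$j" for i j
    by (simp_all add: inner_axis inner_axis' column_def)
  then show ?thesis
    using assms inner_column_column[OF assms(1)]
    by (cases p; cases q) (auto simp: axes_and_columns_def inner_axis_axis)
qed

lemma span_range_axes_and_columns: "span (range (axes_and_columns Q)) = UNIV"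
proof -
  have "axis i 1 = axes_and_columns Q (Inl i)" for i
    by (simp add: axes_and_columns_def)
  then have "Basis \<subseteq> range (axes_and_columns Q)"
    by (auto simp: Basis_vec_def)
  then show ?thesis
    by (metis span_Basis span_mono top.extremum_uniqueI)
qed

lemma axes_and_columns_interpolate:
  fixes Q :: "real^'n^'m" and K :: "('m + 'n) set"
  assumes orth: "transpose Q ** Q = mat 1" and Q: "\<And>i j. \<bar>Q$i$j\<bar> \<le> r" and "0 \<le> r"
    and card: "real (card K) * r \<le> 1/2" and s: "\<And>p. \<bar>s p\<bar> \<le> 1"
  shows "\<exists>a. (\<forall>p\<in>K. a \<bullet> axes_and_columns Q p = s p) \<and>
             (\<forall>p. p \<notin> K \<longrightarrow> \<bar>a \<bullet> axes_and_columns Q p\<bar> < 1)"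
proof -
  define I where "I = Inl -` K"
  define J where "J = Inr -` K"
  have "K = I <+> J"
  proof (intro set_eqI iffI)
    fix p assume "p \<in> K"
    then show "p \<in> I <+> J"
      by (cases p) (auto simp: I_def J_def)
  qed (auto simp: I_def J_def)
  then have card_IJ: "(real (card I) + real (card J)) * r \<le> 1/2"
    using card by (simp add: card_Plus)
  define s' :: "real^'m" where "s' = (\<chi> i. s (Inl i))"
  define t' :: "real^'n" where "t' = (\<chi> j. s (Inr j))"
  obtain x y where x: "x = vec_restrict I (s' - Q *v y)"
    and y: "y = vec_restrict J (t' - transpose Q *v x)"
    using vec_restrict_fixpoint_exists[OF Q \<open>0 \<le> r\<close> card_IJ] by blast
  have Qy: "\<bar>(Q *v y)$i\<bar> \<le> 1/2" and Qx: "\<bar>(transpose Q *v x)$j\<bar> \<le> 1/2" for i j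
    using vec_restrict_fixpoint_bounds[OF Q \<open>0 \<le> r\<close> card_IJ _ _ _ x y] s
    by (auto simp: s'_def t'_def)
  define a where "a = x + Q *v y"
  have Qa: "transpose Q *v a = transpose Q *v x + y"
    by (simp add: a_def matrix_vector_right_distrib matrix_vector_mul_assoc orth)
  have inner_Inl: "a \<bullet> axes_and_columns Q (Inl i) = (if Inl i \<in> K then s (Inl i) else (Q *v y)$i)" for i
    by (subst a_def, subst x) (simp add: axes_and_columns_def inner_axis vec_restrict_def s'_def I_def)
  have inner_Inr: "a \<bullet> axes_and_columns Q (Inr j) =
      (if Inr j \<in> K then s (Inr j) else (transpose Q *v x)$j)" for j
    by (simp only: axes_and_columns_def sum.case inner_column Qa, subst y)
      (simp add: vec_restrict_def t'_def J_def)
  have "(p \<in> K \<longrightarrow> a \<bullet> axes_and_columns Q p = s p) \<and>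
      (p \<notin> K \<longrightarrow> \<bar>a \<bullet> axes_and_columns Q p\<bar> < 1)" for p
  proof (cases p)
    case (Inl i)
    then show ?thesis using inner_Inl[of i] Qy[of i] by simp
  next
    case (Inr j)
    then show ?thesis using inner_Inr[of j] Qx[of j] by simp
  qed
  then show ?thesis
    by blast
qed

lemma cs_neighborly_axes_and_columns:
  fixes Q :: "real^'n^'m"
  assumes orth: "transpose Q ** Q = mat 1" and Q: "\<And>i j. \<bar>Q$i$j\<bar> \<le> r" and "r < 1"
    and "real k * r \<le> 1/2"
  shows "cs_neighborly k (convex hull signed_points (axes_and_columns Q))"
proof (rule cs_neighborly_signed_points)
  show "norm (axes_and_columns Q p) = 1" for p
    using orth by (rule norm_axes_and_columns)
  show "\<bar>axes_and_columns Q p \<bullet> axes_and_columns Q q\<bar> < 1" if "p \<noteq> q" for p q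
    using abs_inner_axes_and_columns_lt_1[OF orth _ that] Q \<open>r < 1\<close> by (meson le_less_trans)
  fix K :: "('m + 'n) set" and s :: "'m + 'n \<Rightarrow> real"
  assume "card K \<le> k" and "\<And>p. s p = 1 \<or> s p = -1"
  then have "\<bar>s p\<bar> \<le> 1" for p
    by (metis abs_minus_cancel abs_one order.refl)
  moreover have "0 \<le> r"
    by (meson Q abs_ge_zero order_trans)
  moreover have "real (card K) * r \<le> 1/2"
    using \<open>card K \<le> k\<close> \<open>0 \<le> r\<close> \<open>real k * r \<le> 1/2\<close>
    by (meson of_nat_mono mult_right_mono order_trans)
  ultimately show "\<exists>a. (\<forall>p\<in>K. a \<bullet> axes_and_columns Q p = s p) \<and>
      (\<forall>p. p \<notin> K \<longrightarrow> \<bar>a \<bullet> axes_and_columns Q p\<bar> < 1)"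
    using axes_and_columns_interpolate[OF orth Q] by blast
qed

lemma card_vertices_axes_and_columns:
  fixes Q :: "real^'n^'m"
  assumes orth: "transpose Q ** Q = mat 1" and "\<And>i j. \<bar>Q$i$j\<bar> < 1"
  shows "card (vertices (convex hull signed_points (axes_and_columns Q))) = 2 * (CARD('m) + CARD('n))"
proof -
  note unit = norm_axes_and_columns[OF orth]
  have "card (signed_points (axes_and_columns Q)) = 2 * CARD('m + 'n)"
    using unit abs_inner_axes_and_columns_lt_1[OF assms] by (rule card_signed_points)
  then show ?thesis
    using vertices_convex_hull_signed_points[of "axes_and_columns Q", OF unit]
    by (simp add: UNIV_Plus_UNIV[symmetric] card_Plus del: UNIV_Plus_UNIV)
qed

lemma aff_dim_axes_and_columns:
  fixes Q :: "real^'n^'m"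
  shows "aff_dim (convex hull signed_points (axes_and_columns Q)) = CARD('m)"
  using aff_dim_convex_hull_signed_points[OF span_range_axes_and_columns] by simp

lemma hadamard_matrix_scaled_orthogonal:
  fixes H :: "real^'n^'n"
  assumes "hadamard_matrix H"
  defines "Q \<equiv> (1 / sqrt CARD('n)) *\<^sub>R H"
  shows "transpose Q ** Q = mat 1" and "\<bar>Q$i$j\<bar> = 1 / sqrt CARD('n)"
proof -
  have "transpose Q ** Q = (1 / sqrt CARD('n))\<^sup>2 *\<^sub>R (transpose H ** H)"
    by (simp add: Q_def transpose_scalar matrix_scalar_ac scalar_matrix_assoc[symmetric] power2_eq_square)
  also have "\<dots> = mat 1"
    using assms(1) by (simp add: hadamard_matrix_def power_divide)
  finally show "transpose Q ** Q = mat 1" .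
  have "H$i$j = 1 \<or> H$i$j = -1"
    using assms(1) by (simp add: hadamard_matrix_def)
  then show "\<bar>Q$i$j\<bar> = 1 / sqrt CARD('n)"
    by (auto simp: Q_def)
qed

lemma nat_floor_half_sqrt_mult_inverse_sqrt:
  assumes "0 < d"
  shows "real (nat \<lfloor>sqrt d / 2\<rfloor>) * (1 / sqrt d) \<le> 1/2"
proof -
  have "real (nat \<lfloor>sqrt d / 2\<rfloor>) \<le> sqrt d / 2"
    using assms by (intro of_nat_floor) simp
  then have "real (nat \<lfloor>sqrt d / 2\<rfloor>) * (1 / sqrt d) \<le> sqrt d / 2 * (1 / sqrt d)"
    using assms by (intro mult_right_mono) simp_all
  also have "\<dots> = 1/2"
    using assms by simp
  finally show ?thesis .
qed

theorem theorem1p1: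
  assumes "CARD('n::finite) \<ge> 4"
    and "\<exists>H :: real^'n^'n. hadamard_matrix H"
  shows "\<exists>P :: (real^'n) set.
           polytope P \<and> centrally_symmetric P \<and> aff_dim P = int CARD('n) \<and>
           card (vertices P) = 4 * CARD('n) \<and>
           cs_neighborly (nat \<lfloor>sqrt (real CARD('n)) / 2\<rfloor>) P"
proof -
  obtain H :: "real^'n^'n" where "hadamard_matrix H"
    using assms(2) by blast
  define Q where "Q = (1 / sqrt CARD('n)) *\<^sub>R H"
  have orth: "transpose Q ** Q = mat 1" and Q: "\<And>i j. \<bar>Q$i$j\<bar> = 1 / sqrt CARD('n)"
    using hadamard_matrix_scaled_orthogonal[OF \<open>hadamard_matrix H\<close>] by (simp_all add: Q_def)
  have "1 / sqrt CARD('n) < 1"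
    using assms(1) by simp
  then have Q_lt_1: "\<bar>Q$i$j\<bar> < 1" for i j
    by (simp add: Q)
  show ?thesis
  proof (intro exI conjI)
    let ?P = "convex hull signed_points (axes_and_columns Q)"
    show "polytope ?P" "centrally_symmetric ?P" "aff_dim ?P = CARD('n)"
      by (simp_all add: polytope_convex_hull_signed_points centrally_symmetric_convex_hull_signed_points
          aff_dim_axes_and_columns)
    show "card (vertices ?P) = 4 * CARD('n)"
      using card_vertices_axes_and_columns[OF orth Q_lt_1] by simp
    show "cs_neighborly (nat \<lfloor>sqrt CARD('n) / 2\<rfloor>) ?P"
      using nat_floor_half_sqrt_mult_inverse_sqrt[of "CARD('n)"]
      by (intro cs_neighborly_axes_and_columns[OF orth _ \<open>1 / sqrt CARD('n) < 1\<close>]) (simp_all add: Q)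
  qed
qed

end
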